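(* Let $l_0\in\mathbb{N}$, let $\eta=(\eta_l)_{l\ge1}$ be a strictly positive sequence with $0<\sup_{l\ge l_0}\eta_l<1$, and let $S$ and the minimal $S$-majorant $\xi\mapsto\widehat{\xi}$ be as in the context. Then every nonnegative, nonincreasing, bounded sequence $\xi=(\xi_l)_{l\ge1}$ satisfies $$\sum_{l=1}^\infty\xi_l<\infty\iff\sum_{l=1}^\infty\widehat{\xi}_l<\infty .$$
   Context: $S$ is the set of real sequences $\sigma=(\sigma_l)_{l\ge1}$ such that (i) $\sigma_l\ge\sigma_{l+1}\ge0$ for all $l\in\mathbb{N}$, and (ii) $\sigma_l-\sigma_{l+1}\ge\eta_l(\sigma_{l-1}-\sigma_l)$ for all $l\ge l_0$ with $l\ge2$. For a bounded sequence $\xi$, a sequence $\sigma\in S$ is an $S$-majorant of $\xi$ if $\sigma_l\ge\xi_l$ for all $l\ge l_0$, and $\widehat{\xi}$ is the pointwise infimum of all $S$-majorants of $\xi$ (it belongs to $S$ and is the minimal $S$-majorant). *)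

theory Defs
  imports Complex_Main
begin

text \<open>Sequences indexed by l \<ge> 1 are represented as functions nat \<Rightarrow> real;
  the value at index 0 is ignored.\<close>

definition inS :: "nat \<Rightarrow> (nat \<Rightarrow> real) \<Rightarrow> (nat \<Rightarrow> real) \<Rightarrow> bool" where
  "inS l0 \<eta> \<sigma> \<longleftrightarrow>
     (\<forall>l\<ge>1. \<sigma> l \<ge> \<sigma> (Suc l) \<and> \<sigma> (Suc l) \<ge> 0) \<and>
     (\<forall>l. l \<ge> l0 \<and> l \<ge> 2 \<longrightarrow> \<sigma> l - \<sigma> (Suc l) \<ge> \<eta> l * (\<sigma> (l - 1) - \<sigma> l))"

definition S_majorant :: "nat \<Rightarrow> (nat \<Rightarrow> real) \<Rightarrow> (nat \<Rightarrow> real) \<Rightarrow> (nat \<Rightarrow> real) \<Rightarrow> bool" where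
  "S_majorant l0 \<eta> \<xi> \<sigma> \<longleftrightarrow> inS l0 \<eta> \<sigma> \<and> (\<forall>l. l \<ge> l0 \<and> l \<ge> 1 \<longrightarrow> \<sigma> l \<ge> \<xi> l)"

definition min_majorant :: "nat \<Rightarrow> (nat \<Rightarrow> real) \<Rightarrow> (nat \<Rightarrow> real) \<Rightarrow> nat \<Rightarrow> real" where
  "min_majorant l0 \<eta> \<xi> = (\<lambda>l. INF \<sigma>\<in>{\<sigma>. S_majorant l0 \<eta> \<xi> \<sigma>}. \<sigma> l)"

end

theory Submission
  imports Defs
begin

text \<open>Constant sequences are \<open>S\<close>-majorants and \<open>\<widehat>\<xi>\<^sub>l \<ge> \<xi>\<^sub>l\<close> for \<open>l \<ge> l\<^sub>0\<close>, so
  summability of \<open>\<widehat>\<xi>\<close> forces that of \<open>\<xi>\<close>. Conversely, with \<open>q = sup\<^sub>l\<^sub>\<ge>\<^sub>l\<^sub>0 \<eta>\<^sub>l < 1\<close>,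
  damp the decrements of \<open>\<xi>\<close> geometrically: \<open>e\<^sub>0 = 0\<close>, \<open>e\<^sub>l = (\<xi>\<^sub>l - \<xi>\<^sub>l\<^sub>+\<^sub>1) + q e\<^sub>l\<^sub>-\<^sub>1\<close>.
  The sequence \<open>\<sigma>\<^sub>l = (\<xi>\<^sub>l + q e\<^sub>l\<^sub>-\<^sub>1) / (1 - q)\<close> has decrements \<open>e\<^sub>l \<ge> q e\<^sub>l\<^sub>-\<^sub>1 \<ge> \<eta>\<^sub>l e\<^sub>l\<^sub>-\<^sub>1\<close>,
  so it is an \<open>S\<close>-majorant of \<open>\<xi>\<close>, and since \<open>\<Sum> e \<le> \<xi>\<^sub>1 / (1 - q)\<close> it is summable whenever
  \<open>\<xi>\<close> is; then so is \<open>\<widehat>\<xi> \<le> \<sigma>\<close>.\<close>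

lemma inS_nonneg:
  assumes "inS l0 \<eta> \<sigma>"
  shows "\<sigma> (Suc l) \<ge> 0"
proof (cases l)
  case 0
  with assms have "\<sigma> 1 \<ge> \<sigma> 2" "\<sigma> 2 \<ge> 0"
    unfolding inS_def by (metis numeral_2_eq_2 order_refl One_nat_def)+
  with 0 show ?thesis by simp
next
  case (Suc m)
  with assms show ?thesis unfolding inS_def by auto
qed

lemma S_majorant_const:
  assumes "\<And>l. l \<ge> 1 \<Longrightarrow> \<bar>\<xi> l\<bar> \<le> B"
  shows "S_majorant l0 \<eta> \<xi> (\<lambda>_. B)"
proof -
  have "B \<ge> 0" using assms[of 1] by simp
  with assms show ?thesis unfolding S_majorant_def inS_def by force
qed

lemma min_majorant_nonneg:
  assumes "S_majorant l0 \<eta> \<xi> \<tau>"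
  shows "min_majorant l0 \<eta> \<xi> (Suc l) \<ge> 0"
  unfolding min_majorant_def
  using assms inS_nonneg by (intro cINF_greatest) (auto simp: S_majorant_def)

lemma min_majorant_le:
  assumes "S_majorant l0 \<eta> \<xi> \<tau>"
  shows "min_majorant l0 \<eta> \<xi> (Suc l) \<le> \<tau> (Suc l)"
  unfolding min_majorant_def
proof (rule cINF_lower)
  show "bdd_below ((\<lambda>\<sigma>. \<sigma> (Suc l)) ` {\<sigma>. S_majorant l0 \<eta> \<xi> \<sigma>})"
    using inS_nonneg by (auto simp: S_majorant_def bdd_below_def intro!: exI[of _ 0])
qed (use assms in simp)

lemma min_majorant_ge:
  assumes "S_majorant l0 \<eta> \<xi> \<tau>" and "l \<ge> l0" and "l \<ge> 1"
  shows "\<xi> l \<le> min_majorant l0 \<eta> \<xi> l"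
  unfolding min_majorant_def
  using assms by (intro cINF_greatest) (auto simp: S_majorant_def)

lemma summable_min_majorant:
  assumes "S_majorant l0 \<eta> \<xi> \<tau>" and "summable (\<lambda>l. \<tau> (Suc l))"
  shows "summable (\<lambda>l. min_majorant l0 \<eta> \<xi> (Suc l))"
  using assms(2)
proof (rule summable_comparison_test'[where N = 0])
  fix l
  show "norm (min_majorant l0 \<eta> \<xi> (Suc l)) \<le> \<tau> (Suc l)"
    using min_majorant_nonneg[OF assms(1)] min_majorant_le[OF assms(1)] by simp
qed

lemma summable_if_summable_min_majorant:
  assumes "S_majorant l0 \<eta> \<xi> \<tau>" and "\<And>l. l \<ge> 1 \<Longrightarrow> \<xi> l \<ge> 0"
    and "summable (\<lambda>l. min_majorant l0 \<eta> \<xi> (Suc l))"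
  shows "summable (\<lambda>l. \<xi> (Suc l))"
  using assms(3)
proof (rule summable_comparison_test'[where N = l0])
  fix l assume "l \<ge> l0"
  then show "norm (\<xi> (Suc l)) \<le> min_majorant l0 \<eta> \<xi> (Suc l)"
    using min_majorant_ge[OF assms(1)] assms(2)[of "Suc l"] by simp
qed

primrec damped_decrements :: "real \<Rightarrow> (nat \<Rightarrow> real) \<Rightarrow> nat \<Rightarrow> real" where
  "damped_decrements q \<xi> 0 = 0"
| "damped_decrements q \<xi> (Suc m) = \<xi> (Suc m) - \<xi> (Suc (Suc m)) + q * damped_decrements q \<xi> m"

definition damped_majorant :: "real \<Rightarrow> (nat \<Rightarrow> real) \<Rightarrow> nat \<Rightarrow> real" where
  "damped_majorant q \<xi> l = (\<xi> l + q * damped_decrements q \<xi> (l - 1)) / (1 - q)"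

lemma damped_decrements_nonneg:
  assumes "q \<ge> 0" and "\<And>l. l \<ge> 1 \<Longrightarrow> \<xi> (Suc l) \<le> \<xi> l"
  shows "damped_decrements q \<xi> m \<ge> 0"
  by (induction m) (use assms in \<open>auto simp: add_increasing2\<close>)

lemma sum_damped_decrements:
  "(\<Sum>m<Suc N. damped_decrements q \<xi> m)
     = \<xi> 1 - \<xi> (Suc N) + q * (\<Sum>m<N. damped_decrements q \<xi> m)"
  by (induction N) (simp_all add: algebra_simps)

lemma summable_damped_decrements:
  assumes "0 \<le> q" "q < 1"
    and "\<And>l. l \<ge> 1 \<Longrightarrow> \<xi> l \<ge> 0" and "\<And>l. l \<ge> 1 \<Longrightarrow> \<xi> (Suc l) \<le> \<xi> l"
  shows "summable (damped_decrements q \<xi>)"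
proof (rule bounded_imp_summable)
  let ?e = "damped_decrements q \<xi>"
  show nonneg: "0 \<le> ?e m" for m
    using damped_decrements_nonneg assms(1,4) by blast
  show "(\<Sum>m\<le>N. ?e m) \<le> \<xi> 1 / (1 - q)" for N
  proof -
    have "(\<Sum>m<Suc N. ?e m) \<le> \<xi> 1 - \<xi> (Suc N) + q * (\<Sum>m<Suc N. ?e m)"
      using sum_damped_decrements[of q \<xi> N] nonneg[of N] assms(1) by (simp add: algebra_simps)
    also have "\<dots> \<le> \<xi> 1 + q * (\<Sum>m<Suc N. ?e m)"
      using assms(3)[of "Suc N"] by simp
    finally have "(1 - q) * (\<Sum>m<Suc N. ?e m) \<le> \<xi> 1"
      by (simp add: algebra_simps)
    then show ?thesis
      using assms(2) by (simp add: lessThan_Suc_atMost field_simps)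
  qed
qed

lemma damped_majorant_decrement:
  assumes "q \<noteq> 1" and "l \<ge> 1"
  shows "damped_majorant q \<xi> l - damped_majorant q \<xi> (Suc l) = damped_decrements q \<xi> l"
proof -
  let ?e = "damped_decrements q \<xi>"
  obtain m where l: "l = Suc m" using assms(2) by (cases l) auto
  have "damped_majorant q \<xi> l - damped_majorant q \<xi> (Suc l)
      = ((\<xi> l + q * ?e m) - (\<xi> (Suc l) + q * ?e l)) / (1 - q)"
    unfolding damped_majorant_def l by (simp add: diff_divide_distrib)
  also have "(\<xi> l + q * ?e m) - (\<xi> (Suc l) + q * ?e l) = (1 - q) * ?e l"
    by (simp add: l algebra_simps)
  finally show ?thesis using assms(1) by simp
qed

lemma damped_majorant_ge:
  assumes "0 \<le> q" "q < 1" and "\<xi> l \<ge> 0" and "\<And>l. l \<ge> 1 \<Longrightarrow> \<xi> (Suc l) \<le> \<xi> l"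
  shows "\<xi> l \<le> damped_majorant q \<xi> l"
proof -
  let ?x = "\<xi> l + q * damped_decrements q \<xi> (l - 1)"
  have "\<xi> l \<le> ?x" and "0 \<le> ?x"
    using assms damped_decrements_nonneg[of q \<xi> "l - 1"] by simp_all
  moreover have "?x \<le> ?x / (1 - q)"
    using \<open>0 \<le> ?x\<close> assms(1,2) by (simp add: le_divide_eq mult_left_le)
  ultimately show ?thesis
    unfolding damped_majorant_def by linarith
qed

lemma S_majorant_damped_majorant:
  assumes "0 \<le> q" "q < 1" and "\<And>l. l \<ge> l0 \<Longrightarrow> l \<ge> 1 \<Longrightarrow> \<eta> l \<le> q"
    and "\<And>l. l \<ge> 1 \<Longrightarrow> \<xi> l \<ge> 0" and "\<And>l. l \<ge> 1 \<Longrightarrow> \<xi> (Suc l) \<le> \<xi> l"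
  shows "S_majorant l0 \<eta> \<xi> (damped_majorant q \<xi>)"
proof -
  let ?e = "damped_decrements q \<xi>" and ?\<sigma> = "damped_majorant q \<xi>"
  have decr: "?\<sigma> l - ?\<sigma> (Suc l) = ?e l" if "l \<ge> 1" for l
    using damped_majorant_decrement assms(2) that by simp
  have e_nonneg: "?e m \<ge> 0" for m
    using damped_decrements_nonneg assms(1,5) by blast
  have ge: "\<xi> l \<le> ?\<sigma> l" if "l \<ge> 1" for l
    using damped_majorant_ge assms(1,2,4,5) that by blast
  have mono: "?\<sigma> (Suc l) \<le> ?\<sigma> l" and nonneg: "0 \<le> ?\<sigma> (Suc l)" if "l \<ge> 1" for l
    using decr[OF that] e_nonneg[of l] ge[of "Suc l"] assms(4)[of "Suc l"] by simp_all
  have ratio: "\<eta> l * (?\<sigma> (l - 1) - ?\<sigma> l) \<le> ?\<sigma> l - ?\<sigma> (Suc l)"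
    if l0: "l \<ge> l0" and l2: "l \<ge> 2" for l
  proof -
    obtain m where l: "l = Suc m" using l2 by (cases l) auto
    with l2 have m: "m \<ge> 1" by simp
    have "\<eta> l * ?e m \<le> q * ?e m"
      using assms(3) l0 l2 e_nonneg by (intro mult_right_mono) auto
    also have "\<dots> \<le> ?e l"
      using assms(5)[of l] l by simp
    finally show ?thesis
      using decr[of l] decr[OF m] m by (simp add: l)
  qed
  show ?thesis
    unfolding S_majorant_def inS_def using ge mono nonneg ratio by simp
qed

lemma summable_damped_majorant:
  assumes "0 \<le> q" "q < 1"
    and "\<And>l. l \<ge> 1 \<Longrightarrow> \<xi> l \<ge> 0" and "\<And>l. l \<ge> 1 \<Longrightarrow> \<xi> (Suc l) \<le> \<xi> l"
    and "summable (\<lambda>l. \<xi> (Suc l))"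
  shows "summable (\<lambda>l. damped_majorant q \<xi> (Suc l))"
  unfolding damped_majorant_def
  using assms(5) summable_damped_decrements[of q \<xi>] assms(1-4)
  by (intro summable_divide summable_add summable_mult) simp_all

theorem lemma23:
  fixes l0 :: nat and \<eta> \<xi> :: "nat \<Rightarrow> real"
  assumes eta_pos: "\<forall>l\<ge>1. \<eta> l > 0"
    and eta_bdd: "bdd_above {\<eta> l | l. l \<ge> l0 \<and> l \<ge> 1}"
    and eta_sup_pos: "0 < Sup {\<eta> l | l. l \<ge> l0 \<and> l \<ge> 1}"
    and eta_sup_lt1: "Sup {\<eta> l | l. l \<ge> l0 \<and> l \<ge> 1} < 1"
    and xi_nonneg: "\<forall>l\<ge>1. \<xi> l \<ge> 0"
    and xi_noninc: "\<forall>l\<ge>1. \<xi> (Suc l) \<le> \<xi> l"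
    and xi_bdd: "\<exists>B. \<forall>l\<ge>1. \<bar>\<xi> l\<bar> \<le> B"
  shows "summable (\<lambda>l. \<xi> (Suc l)) \<longleftrightarrow> summable (\<lambda>l. min_majorant l0 \<eta> \<xi> (Suc l))"
proof -
  have \<xi>_nonneg: "\<And>l. l \<ge> 1 \<Longrightarrow> \<xi> l \<ge> 0"
    and \<xi>_noninc: "\<And>l. l \<ge> 1 \<Longrightarrow> \<xi> (Suc l) \<le> \<xi> l"
    using xi_nonneg xi_noninc by simp_all
  define q where "q = Sup {\<eta> l | l. l \<ge> l0 \<and> l \<ge> 1}"
  have q: "0 \<le> q" "q < 1"
    using eta_sup_pos eta_sup_lt1 by (simp_all add: q_def)
  have \<eta>_le: "\<eta> l \<le> q" if "l \<ge> l0" "l \<ge> 1" for l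
    unfolding q_def using that eta_bdd by (intro cSup_upper) auto
  obtain B where B: "\<And>l. l \<ge> 1 \<Longrightarrow> \<bar>\<xi> l\<bar> \<le> B"
    using xi_bdd by blast
  show ?thesis
  proof
    have "S_majorant l0 \<eta> \<xi> (damped_majorant q \<xi>)"
      using S_majorant_damped_majorant[where q = q and \<eta> = \<eta> and \<xi> = \<xi>] q \<eta>_le \<xi>_nonneg \<xi>_noninc
      by blast
    moreover assume "summable (\<lambda>l. \<xi> (Suc l))"
    then have "summable (\<lambda>l. damped_majorant q \<xi> (Suc l))"
      using summable_damped_majorant[where q = q and \<xi> = \<xi>] q \<xi>_nonneg \<xi>_noninc by blast
    ultimately show "summable (\<lambda>l. min_majorant l0 \<eta> \<xi> (Suc l))"
      by (rule summable_min_majorant)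
  next
    have "S_majorant l0 \<eta> \<xi> (\<lambda>_. B)"
      using S_majorant_const[where \<xi> = \<xi>] B by blast
    moreover assume "summable (\<lambda>l. min_majorant l0 \<eta> \<xi> (Suc l))"
    ultimately show "summable (\<lambda>l. \<xi> (Suc l))"
      using summable_if_summable_min_majorant[where \<xi> = \<xi>] \<xi>_nonneg by blast
  qed
qed

end
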